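(* Let $\vec{\mathcal G}=([n],E)$ be a directed graph with $m=|E|$ edges in which every vertex has at least one outgoing edge and which has a single strongly connected component. Let the weights $(r_{ij})$ be independent absolutely continuous random variables with densities $f_{ij}$ satisfying $f_{ij}(y)\le\phi$ for all $(i,j),y$, for some $\phi>0$. Let $\delta=1/(3n^2m\phi)$. Then $$\mathbb P\bigl(\exists \text{ a cycle } C:\ B_\infty(r,\delta)\subseteq\mathcal P^{C}\bigr)\ge 1-\frac1n,$$ where $B_\infty(r,\delta)=\{\tilde r\in\mathbb R^m:\|r-\tilde r\|_\infty\le\delta\}$.
   Context: The mean weight of a directed cycle is the sum of its edge weights divided by its number of edges. For a directed cycle $C$, $\mathcal P^{C}$ is the set of $r\in\mathbb R^m$ such that $C$ is the unique cycle of minimum mean weight in $\vec{\mathcal G}$ with weights $r$. *)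

theory Defs
  imports "HOL-Probability.Probability"
begin

text \<open>A directed cycle is identified with its (nonempty) set of edges, given by a
  nonempty list of distinct vertices v_0,...,v_{k-1} with edges (v_i, v_{(i+1) mod k}).\<close>

definition is_dcycle :: "(nat \<times> nat) set \<Rightarrow> (nat \<times> nat) set \<Rightarrow> bool" where
  "is_dcycle E C \<longleftrightarrow> (\<exists>vs. vs \<noteq> [] \<and> distinct vs \<and>
      C = {(vs ! i, vs ! ((i + 1) mod length vs)) | i. i < length vs} \<and> C \<subseteq> E)"

definition mean_weight :: "(nat \<times> nat \<Rightarrow> real) \<Rightarrow> (nat \<times> nat) set \<Rightarrow> real" where
  "mean_weight r C = (\<Sum>e\<in>C. r e) / real (card C)"

definition unique_min_region :: "(nat \<times> nat) set \<Rightarrow> (nat \<times> nat) set \<Rightarrow> (nat \<times> nat \<Rightarrow> real) set" where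
  "unique_min_region E C = {r. is_dcycle E C \<and>
      (\<forall>C'. is_dcycle E C' \<and> C' \<noteq> C \<longrightarrow> mean_weight r C < mean_weight r C')}"

text \<open>Closed sup-norm ball in R^E (coordinates outside E are unconstrained; they do not
  influence mean weights of cycles in E).\<close>
definition ball_inf :: "(nat \<times> nat) set \<Rightarrow> (nat \<times> nat \<Rightarrow> real) \<Rightarrow> real \<Rightarrow> (nat \<times> nat \<Rightarrow> real) set" where
  "ball_inf E r d = {r'. \<forall>e\<in>E. \<bar>r e - r' e\<bar> \<le> d}"

end

theory Submission
  imports Defs
begin

text \<open>Call an edge e ambiguous for weights r if it lies on a cycle of minimum mean weight while
  some cycle avoiding e comes within 2\<delta> of that minimum. If no cycle C has the whole ball
  B(r, \<delta>) inside P^C, some edge is ambiguous: take a minimum cycle C1 and a point of the ball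
  at which another cycle C2 does at least as well; then C2 is within 2\<delta> of C1 at r, and since
  distinct cycles never contain one another, some edge of C1 avoids C2. With the other weights
  fixed, raising r_e by more than 2\<delta>n lifts every cycle through e by more than 2\<delta> relative to
  the cycles avoiding e, so the ambiguous values of r_e lie in an interval of length 2\<delta>n, which
  by independence and the density bound has probability at most 2\<delta>n\<phi>. A union bound over the
  m edges bounds the failure probability by 2\<delta>nm\<phi> = 2/(3n).\<close>

section \<open>Directed cycles\<close>

definition dcycles :: "(nat \<times> nat) set \<Rightarrow> (nat \<times> nat) set set" where
  "dcycles E = {C. is_dcycle E C}"

lemma is_dcycleE:
  assumes "is_dcycle E C"
  obtains vs where "vs \<noteq> []" "distinct vs" "C \<subseteq> E"
    "C = (\<lambda>i. (vs ! i, vs ! (Suc i mod length vs))) ` {..<length vs}"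
  using assms unfolding is_dcycle_def by (auto simp: image_def)

lemma dcycle_subset: "is_dcycle E C \<Longrightarrow> C \<subseteq> E"
  by (auto elim: is_dcycleE)

lemma dcycle_card_pos: "is_dcycle E C \<Longrightarrow> 0 < card C"
  by (auto elim!: is_dcycleE simp: card_gt_0_iff)

lemma dcycle_card_le:
  assumes "is_dcycle E C" "E \<subseteq> {0..<n} \<times> {0..<n}"
  shows "card C \<le> n"
proof -
  obtain vs where vs: "distinct vs" "C \<subseteq> E"
    and C: "C = (\<lambda>i. (vs ! i, vs ! (Suc i mod length vs))) ` {..<length vs}"
    using assms(1) by (rule is_dcycleE)
  have "set vs \<subseteq> fst ` C"
    by (auto simp: C in_set_conv_nth image_iff)
  also have "\<dots> \<subseteq> {0..<n}"
    using vs(2) assms(2) by auto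
  finally have "length vs \<le> n"
    using distinct_card[OF vs(1)] card_mono[of "{0..<n}" "set vs"] by simp
  moreover have "card C \<le> length vs"
    unfolding C using card_image_le[of "{..<length vs}"] by simp
  ultimately show ?thesis by simp
qed

lemma finite_dcycles: "finite E \<Longrightarrow> finite (dcycles E)"
  by (rule finite_subset[of _ "Pow E"]) (auto simp: dcycles_def dest: dcycle_subset)

lemma dcycle_out_unique:
  assumes "is_dcycle E C" "(a, b) \<in> C" "(a, b') \<in> C"
  shows "b = b'"
  using assms by (elim is_dcycleE) (auto simp: nth_eq_iff_index_eq)

lemma dcycle_target_is_source:
  assumes "is_dcycle E C" "(a, b) \<in> C"
  shows "b \<in> fst ` C"
proof -
  obtain vs where "vs \<noteq> []"
    and C: "C = (\<lambda>i. (vs ! i, vs ! (Suc i mod length vs))) ` {..<length vs}"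
    using assms(1) by (rule is_dcycleE)
  then obtain i where "i < length vs" "b = vs ! (Suc i mod length vs)"
    using assms(2) by auto
  moreover have "Suc i mod length vs < length vs"
    using \<open>vs \<noteq> []\<close> by simp
  ultimately have "(b, vs ! (Suc (Suc i mod length vs) mod length vs)) \<in> C"
    unfolding C by blast
  then show ?thesis by force
qed

lemma dcycle_successor_closed_eq:
  assumes "is_dcycle E C" "S \<subseteq> fst ` C" "S \<noteq> {}"
    and closed: "\<And>a b. a \<in> S \<Longrightarrow> (a, b) \<in> C \<Longrightarrow> b \<in> S"
  shows "S = fst ` C"
proof -
  obtain vs where vs: "vs \<noteq> []"
    and C: "C = (\<lambda>i. (vs ! i, vs ! (Suc i mod length vs))) ` {..<length vs}"
    using assms(1) by (rule is_dcycleE)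
  define k where "k = length vs"
  have k: "0 < k" using vs by (simp add: k_def)
  have edge: "(vs ! (j mod k), vs ! (Suc j mod k)) \<in> C" for j
    using k unfolding C k_def by (auto simp: image_iff mod_Suc_eq intro!: bexI[of _ "j mod length vs"])
  obtain a where "a \<in> S" using assms(3) by blast
  then obtain j0 where "vs ! j0 \<in> S" "j0 < k"
    using assms(2) unfolding C k_def by auto
  then have orbit: "vs ! ((j0 + t) mod k) \<in> S" for t
    by (induction t) (auto intro: closed[OF _ edge])
  have "vs ! j \<in> S" if "j < k" for j
    using orbit[of "k - j0 + j"] that \<open>j0 < k\<close> by simp
  then have "fst ` C \<subseteq> S"
    unfolding C k_def by auto
  then show ?thesis using assms(2) by blast
qed

lemma dcycle_subset_imp_eq:
  assumes C1: "is_dcycle E C1" and C2: "is_dcycle E C2" and "C1 \<subseteq> C2"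
  shows "C1 = C2"
proof -
  have "fst ` C1 = fst ` C2"
  proof (rule dcycle_successor_closed_eq[OF C2])
    show "fst ` C1 \<noteq> {}" using dcycle_card_pos[OF C1] by auto
    show "b \<in> fst ` C1" if a: "a \<in> fst ` C1" and ab: "(a, b) \<in> C2" for a b
    proof -
      obtain b' where "(a, b') \<in> C1" using a by (metis imageE prod.collapse)
      with ab have "b = b'" using \<open>C1 \<subseteq> C2\<close> dcycle_out_unique[OF C2] by blast
      with \<open>(a, b') \<in> C1\<close> show ?thesis using dcycle_target_is_source[OF C1] by blast
    qed
  qed (use \<open>C1 \<subseteq> C2\<close> in auto)
  have "C2 \<subseteq> C1"
  proof
    fix p assume "p \<in> C2"
    obtain a b where p: "p = (a, b)" by (cases p)
    have "a \<in> fst ` C1"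
      using \<open>p \<in> C2\<close> \<open>fst ` C1 = fst ` C2\<close> p by (metis fst_conv image_eqI)
    then obtain b' where "(a, b') \<in> C1" by (metis imageE prod.collapse)
    then show "p \<in> C1"
      using dcycle_out_unique[OF C2] \<open>p \<in> C2\<close> \<open>C1 \<subseteq> C2\<close> p by blast
  qed
  with \<open>C1 \<subseteq> C2\<close> show ?thesis by blast
qed

lemma ex_periodic_point:
  fixes s :: "nat \<Rightarrow> nat"
  assumes "1 \<le> n" and s: "\<And>i. i < n \<Longrightarrow> s i < n"
  obtains p k where "p < n" "0 < k" "(s ^^ k) p = p"
proof -
  have orbit: "(s ^^ t) 0 < n" for t
    by (induction t) (use assms in auto)
  have "\<not> inj_on (\<lambda>t. (s ^^ t) 0) {0..n}"
  proof
    assume "inj_on (\<lambda>t. (s ^^ t) 0) {0..n}"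
    moreover have "(\<lambda>t. (s ^^ t) 0) ` {0..n} \<subseteq> {0..<n}" using orbit by auto
    ultimately have "card {0..n} \<le> card {0..<n}" by (rule card_inj_on_le) simp
    then show False by simp
  qed
  then obtain a b where "a < b" "(s ^^ a) 0 = (s ^^ b) 0"
    unfolding inj_on_def by (metis linorder_neqE_nat)
  have "(s ^^ (b - a)) ((s ^^ a) 0) = (s ^^ (b - a + a)) 0"
    by (simp add: funpow_add)
  also have "\<dots> = (s ^^ a) 0"
    using \<open>a < b\<close> \<open>(s ^^ a) 0 = (s ^^ b) 0\<close> by simp
  finally show thesis
    using \<open>a < b\<close> orbit by (intro that) auto
qed

lemma distinct_orbit_before_period:
  assumes "(s ^^ k) p = p" and minimal: "\<And>j. 0 < j \<Longrightarrow> j < k \<Longrightarrow> (s ^^ j) p \<noteq> p"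
  shows "distinct (map (\<lambda>t. (s ^^ t) p) [0..<k])"
proof -
  have "(s ^^ i) p \<noteq> (s ^^ j) p" if "i < j" "j < k" for i j
  proof
    assume eq: "(s ^^ i) p = (s ^^ j) p"
    have "(s ^^ (k - j + i)) p = (s ^^ (k - j)) ((s ^^ i) p)"
      by (simp add: funpow_add)
    also have "\<dots> = (s ^^ (k - j)) ((s ^^ j) p)"
      by (simp only: eq)
    also have "\<dots> = (s ^^ (k - j + j)) p"
      by (simp add: funpow_add)
    also have "\<dots> = p"
      using that assms(1) by simp
    finally have "(s ^^ (k - j + i)) p = p" .
    moreover have "0 < k - j + i" "k - j + i < k"
      using that by auto
    ultimately show False
      using minimal[of "k - j + i"] by simp
  qed
  then show ?thesis
    unfolding distinct_conv_nth by simp (metis linorder_neqE_nat)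
qed

lemma dcycle_of_periodic_point:
  assumes "0 < k" "(s ^^ k) p = p" "\<And>j. 0 < j \<Longrightarrow> j < k \<Longrightarrow> (s ^^ j) p \<noteq> p"
    and edges: "\<And>t. ((s ^^ t) p, s ((s ^^ t) p)) \<in> E"
  shows "is_dcycle E ((\<lambda>i. ((s ^^ i) p, (s ^^ Suc i) p)) ` {..<k})"
proof -
  define vs where "vs = map (\<lambda>t. (s ^^ t) p) [0..<k]"
  have "(\<lambda>i. ((s ^^ i) p, (s ^^ Suc i) p)) ` {..<k}
      = (\<lambda>i. (vs ! i, vs ! (Suc i mod length vs))) ` {..<length vs}"
    using \<open>0 < k\<close> funpow_mod_eq[OF assms(2)] by (intro image_cong) (auto simp: vs_def)
  also have "\<dots> = {(vs ! i, vs ! ((i + 1) mod length vs)) | i. i < length vs}"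
    by auto
  finally have "(\<lambda>i. ((s ^^ i) p, (s ^^ Suc i) p)) ` {..<k}
      = {(vs ! i, vs ! ((i + 1) mod length vs)) | i. i < length vs}" .
  moreover have "vs \<noteq> []" "distinct vs"
    using \<open>0 < k\<close> distinct_orbit_before_period[OF assms(2,3)] by (auto simp: vs_def)
  moreover have "(\<lambda>i. ((s ^^ i) p, (s ^^ Suc i) p)) ` {..<k} \<subseteq> E"
    using edges by auto
  ultimately show ?thesis
    unfolding is_dcycle_def by blast
qed

lemma dcycles_nonempty:
  assumes "1 \<le> n" "E \<subseteq> {0..<n} \<times> {0..<n}" "\<forall>i\<in>{0..<n}. \<exists>j. (i, j) \<in> E"
  shows "dcycles E \<noteq> {}"
proof -
  obtain s where "\<forall>i\<in>{0..<n}. (i, s i) \<in> E"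
    using bchoice[OF assms(3)] by blast
  then have s: "\<And>i. i < n \<Longrightarrow> (i, s i) \<in> E"
    by simp
  have s_lt: "i < n \<Longrightarrow> s i < n" for i
    using s assms(2) by fastforce
  obtain p k where p: "p < n" and k: "0 < k" "(s ^^ k) p = p"
    using ex_periodic_point[OF assms(1) s_lt] .
  define k' where "k' = (LEAST k. 0 < k \<and> (s ^^ k) p = p)"
  have k': "0 < k'" "(s ^^ k') p = p"
    using LeastI[of "\<lambda>k. 0 < k \<and> (s ^^ k) p = p", OF conjI[OF k]] by (auto simp: k'_def)
  have minimal: "(s ^^ j) p \<noteq> p" if "0 < j" "j < k'" for j
    using not_less_Least[of j "\<lambda>k. 0 < k \<and> (s ^^ k) p = p"] that by (auto simp: k'_def)
  have "(s ^^ t) p < n" for t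
    by (induction t) (use p s_lt in auto)
  then have "((s ^^ t) p, s ((s ^^ t) p)) \<in> E" for t
    using s by blast
  then show ?thesis
    using dcycle_of_periodic_point[OF k' minimal] unfolding dcycles_def by blast
qed

section \<open>Mean weights on a sup-norm ball\<close>

lemma mean_weight_cong:
  "(\<And>x. x \<in> C \<Longrightarrow> r x = r' x) \<Longrightarrow> mean_weight r C = mean_weight r' C"
  unfolding mean_weight_def by (simp cong: sum.cong)

lemma mean_weight_fun_upd_diff:
  assumes "finite C" "e \<in> C"
  shows "mean_weight (r(e := y)) C - mean_weight (r(e := x)) C = (y - x) / real (card C)"
proof -
  have "(\<Sum>a\<in>C. (r(e := z)) a) = z + (\<Sum>a\<in>C - {e}. r a)" for z
  proof -
    have "(\<Sum>a\<in>C - {e}. (r(e := z)) a) = (\<Sum>a\<in>C - {e}. r a)"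
      by (rule sum.cong) auto
    then show ?thesis using assms by (simp add: sum.remove)
  qed
  then show ?thesis
    unfolding mean_weight_def by (simp add: diff_divide_distrib add_divide_distrib)
qed

lemma mean_weight_diff_le_ball_inf:
  assumes "0 < card C" "C \<subseteq> E" "r' \<in> ball_inf E r d"
  shows "\<bar>mean_weight r' C - mean_weight r C\<bar> \<le> d"
proof -
  have "\<bar>(\<Sum>a\<in>C. r' a) - (\<Sum>a\<in>C. r a)\<bar> \<le> (\<Sum>a\<in>C. \<bar>r' a - r a\<bar>)"
    by (simp add: sum_subtractf[symmetric])
  also have "\<dots> \<le> real (card C) * d"
    using sum_mono[of C "\<lambda>a. \<bar>r' a - r a\<bar>" "\<lambda>_. d"] assms(2,3)
    by (auto simp: ball_inf_def abs_minus_commute)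
  finally show ?thesis
    using assms(1) unfolding mean_weight_def
    by (simp add: diff_divide_distrib[symmetric] pos_divide_le_eq mult.commute)
qed

definition mean_diff_coeff :: "(nat \<times> nat) set \<Rightarrow> (nat \<times> nat) set \<Rightarrow> nat \<times> nat \<Rightarrow> real" where
  "mean_diff_coeff C1 C2 e =
     (if e \<in> C2 then 1 / real (card C2) else 0) - (if e \<in> C1 then 1 / real (card C1) else 0)"

lemma mean_weight_eq_sum:
  assumes "finite E" "C \<subseteq> E"
  shows "mean_weight r C = (\<Sum>e\<in>E. (if e \<in> C then 1 / real (card C) else 0) * r e)"
proof -
  have "(\<Sum>e\<in>E. (if e \<in> C then 1 / real (card C) else 0) * r e)
      = (\<Sum>e\<in>E. if e \<in> C then r e / real (card C) else 0)"
    by (intro sum.cong) auto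
  also have "\<dots> = (\<Sum>e\<in>E \<inter> C. r e / real (card C))"
    using assms(1) by (simp add: sum.inter_restrict)
  also have "E \<inter> C = C" using assms(2) by blast
  finally show ?thesis
    unfolding mean_weight_def by (simp add: sum_divide_distrib)
qed

lemma mean_weight_diff_eq_sum:
  assumes "finite E" "C1 \<subseteq> E" "C2 \<subseteq> E"
  shows "mean_weight r C2 - mean_weight r C1 = (\<Sum>e\<in>E. mean_diff_coeff C1 C2 e * r e)"
  unfolding mean_diff_coeff_def mean_weight_eq_sum[OF assms(1,2)] mean_weight_eq_sum[OF assms(1,3)]
  by (simp add: sum_subtractf[symmetric] left_diff_distrib)

text \<open>Robust optimality of C1 on the ball is a finite system of strict linear inequalities in
  the centre r: the worst point of the ball for the pair C1, C2 moves every coordinate by d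
  against the sign of its coefficient.\<close>
lemma ball_inf_subset_unique_min_region_iff:
  assumes "finite E" "0 \<le> d"
  shows "ball_inf E r d \<subseteq> unique_min_region E C1 \<longleftrightarrow>
    is_dcycle E C1 \<and> (\<forall>C2. is_dcycle E C2 \<and> C2 \<noteq> C1 \<longrightarrow>
       d * (\<Sum>e\<in>E. \<bar>mean_diff_coeff C1 C2 e\<bar>) < (\<Sum>e\<in>E. mean_diff_coeff C1 C2 e * r e))"
    (is "?ball \<longleftrightarrow> _ \<and> (\<forall>C2. _ \<longrightarrow> ?margin C2)")
proof
  assume ball: ?ball
  have "r \<in> ball_inf E r d" unfolding ball_inf_def using assms(2) by simp
  then have C1: "is_dcycle E C1" using ball unfolding unique_min_region_def by blast
  moreover have "?margin C2" if C2: "is_dcycle E C2" "C2 \<noteq> C1" for C2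
  proof -
    let ?c = "mean_diff_coeff C1 C2"
    define r' where "r' e = r e - d * sgn (?c e)" for e
    have "r' \<in> ball_inf E r d" unfolding ball_inf_def r'_def using assms(2)
      by (auto simp: abs_mult sgn_if)
    then have "mean_weight r' C1 < mean_weight r' C2"
      using ball C2 unfolding unique_min_region_def by blast
    then have "0 < (\<Sum>e\<in>E. ?c e * r' e)"
      using mean_weight_diff_eq_sum[OF assms(1) dcycle_subset[OF C1] dcycle_subset[OF C2(1)], of r'] by simp
    moreover have "?c e * r' e = ?c e * r e - d * \<bar>?c e\<bar>" for e
      unfolding r'_def by (simp add: sgn_if algebra_simps)
    ultimately show ?thesis
      by (simp add: sum_subtractf sum_distrib_left)
  qed
  ultimately show "is_dcycle E C1 \<and> (\<forall>C2. is_dcycle E C2 \<and> C2 \<noteq> C1 \<longrightarrow> ?margin C2)"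
    by blast
next
  assume H: "is_dcycle E C1 \<and> (\<forall>C2. is_dcycle E C2 \<and> C2 \<noteq> C1 \<longrightarrow> ?margin C2)"
  have "mean_weight r' C1 < mean_weight r' C2"
    if r': "r' \<in> ball_inf E r d" and C2: "is_dcycle E C2" "C2 \<noteq> C1" for r' C2
  proof -
    let ?c = "mean_diff_coeff C1 C2"
    have le: "?c e * r e - d * \<bar>?c e\<bar> \<le> ?c e * r' e" if "e \<in> E" for e
    proof -
      have "\<bar>r' e - r e\<bar> \<le> d" using r' that unfolding ball_inf_def by (simp add: abs_minus_commute)
      then have "\<bar>?c e * (r' e - r e)\<bar> \<le> \<bar>?c e\<bar> * d"
        by (simp add: abs_mult mult_left_mono)
      then show ?thesis by (simp add: algebra_simps abs_le_iff)
    qed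
    have "0 < (\<Sum>e\<in>E. ?c e * r e) - d * (\<Sum>e\<in>E. \<bar>?c e\<bar>)" using H C2 by simp
    also have "\<dots> = (\<Sum>e\<in>E. ?c e * r e - d * \<bar>?c e\<bar>)"
      by (simp add: sum_subtractf sum_distrib_left)
    also have "\<dots> \<le> (\<Sum>e\<in>E. ?c e * r' e)" using le by (intro sum_mono) auto
    also have "\<dots> = mean_weight r' C2 - mean_weight r' C1"
      using mean_weight_diff_eq_sum[OF assms(1) dcycle_subset dcycle_subset] H C2 by simp
    finally show ?thesis by simp
  qed
  then show ?ball using H unfolding unique_min_region_def by blast
qed

section \<open>Events of small width\<close>

lemma emeasure_lborel_le_width:
  fixes S :: "real set"
  assumes width: "\<And>x y. x \<in> S \<Longrightarrow> y \<in> S \<Longrightarrow> y - x \<le> L" and "0 \<le> L"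
  shows "emeasure lborel S \<le> ennreal L"
proof (cases "S = {}")
  case False
  then obtain y0 where y0: "y0 \<in> S" by blast
  have bdd: "bdd_below S"
    unfolding bdd_below_def using width[OF _ y0] by (metis diff_le_eq add.commute)
  have "S \<subseteq> {Inf S .. Inf S + L}"
  proof
    fix y assume y: "y \<in> S"
    have "y - L \<le> Inf S"
      using False width[OF _ y] by (intro cInf_greatest) (auto simp: algebra_simps)
    with cInf_lower[OF y bdd] show "y \<in> {Inf S .. Inf S + L}" by simp
  qed
  then have "emeasure lborel S \<le> emeasure lborel {Inf S .. Inf S + L}"
    by (intro emeasure_mono) auto
  also have "\<dots> = ennreal L" using \<open>0 \<le> L\<close> by simp
  finally show ?thesis .
qed simp

lemma emeasure_distributed_le_width:
  fixes Y :: "'a \<Rightarrow> real"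
  assumes "distributed M lborel Y g" and "\<And>y. g y \<le> ennreal \<phi>" "0 \<le> \<phi>"
    and "B \<in> sets borel" and width: "\<And>x y. x \<in> B \<Longrightarrow> y \<in> B \<Longrightarrow> y - x \<le> L" and "0 \<le> L"
  shows "emeasure M (Y -` B \<inter> space M) \<le> ennreal (\<phi> * L)"
proof -
  have "emeasure M (Y -` B \<inter> space M) = (\<integral>\<^sup>+x. g x * indicator B x \<partial>lborel)"
    using assms(1,4) by (intro distributed_emeasure) auto
  also have "\<dots> \<le> (\<integral>\<^sup>+x. ennreal \<phi> * indicator B x \<partial>lborel)"
    using assms(2) by (intro nn_integral_mono) (auto intro: mult_right_mono)
  also have "\<dots> = ennreal \<phi> * emeasure lborel B"
    using assms(4) by (intro nn_integral_cmult_indicator) auto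
  also have "\<dots> \<le> ennreal \<phi> * ennreal L"
    using emeasure_lborel_le_width[OF width \<open>0 \<le> L\<close>] by (intro mult_left_mono) auto
  also have "\<dots> = ennreal (\<phi> * L)"
    using assms(3,6) by (simp add: ennreal_mult)
  finally show ?thesis .
qed

text \<open>Independence makes the joint law of the other coordinates and X e a product measure, so
  the probability is an integral of section measures, each at most \<phi> L.\<close>
lemma (in prob_space) narrow_section_event:
  fixes X :: "'i \<Rightarrow> 'a \<Rightarrow> real" and Q :: "('i \<Rightarrow> real) \<Rightarrow> real \<Rightarrow> bool"
  assumes ind: "indep_vars (\<lambda>_. borel) X I" and "e \<in> I"
    and dist: "distributed M lborel (X e) g" and "\<And>y. g y \<le> ennreal \<phi>" "0 \<le> \<phi>" "0 \<le> L"
    and Qm: "Measurable.pred (PiM (I - {e}) (\<lambda>_. borel) \<Otimes>\<^sub>M borel) (\<lambda>p. Q (fst p) (snd p))"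
    and width: "\<And>y x x'. Q y x \<Longrightarrow> Q y x' \<Longrightarrow> x' - x \<le> L"
  shows "{\<omega> \<in> space M. Q (restrict (\<lambda>i. X i \<omega>) (I - {e})) (X e \<omega>)} \<in> events"
    and "emeasure M {\<omega> \<in> space M. Q (restrict (\<lambda>i. X i \<omega>) (I - {e})) (X e \<omega>)} \<le> ennreal (\<phi> * L)"
proof -
  define T where "T = PiM (I - {e}) (\<lambda>_. borel :: real measure)"
  define U where "U = PiM {e} (\<lambda>_. borel :: real measure)"
  define Y where "Y \<omega> = restrict (\<lambda>i. X i \<omega>) (I - {e})" for \<omega>
  define Z where "Z \<omega> = restrict (\<lambda>i. X i \<omega>) {e}" for \<omega>
  have "indep_var T Y U Z"
    unfolding T_def Y_def U_def Z_def using \<open>e \<in> I\<close> by (intro indep_var_restrict[OF ind]) auto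
  then have prod: "distr M T Y \<Otimes>\<^sub>M distr M U Z = distr M (T \<Otimes>\<^sub>M U) (\<lambda>x. (Y x, Z x))"
    and rvY: "random_variable T Y" and rvZ: "random_variable U Z"
    unfolding indep_var_distribution_eq by auto
  interpret PZ: prob_space "distr M U Z" using rvZ by (rule prob_space_distr)
  interpret PY: prob_space "distr M T Y" using rvY by (rule prob_space_distr)
  define G where "G = {p \<in> space (T \<Otimes>\<^sub>M U). Q (fst p) (snd p e)}"
  have "(\<lambda>p. (fst p, snd p e)) \<in> measurable (T \<Otimes>\<^sub>M U) (T \<Otimes>\<^sub>M borel)"
    unfolding U_def by measurable
  from measurable_compose[OF this Qm[folded T_def]] have G: "G \<in> sets (T \<Otimes>\<^sub>M U)"
    unfolding G_def by (simp add: o_def)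
  have YZ: "(\<lambda>x. (Y x, Z x)) \<in> measurable M (T \<Otimes>\<^sub>M U)" using rvY rvZ by measurable
  have event: "{\<omega> \<in> space M. Q (Y \<omega>) (X e \<omega>)} = (\<lambda>x. (Y x, Z x)) -` G \<inter> space M"
    unfolding G_def using YZ by (auto simp: measurable_def Z_def)
  then show "{\<omega> \<in> space M. Q (restrict (\<lambda>i. X i \<omega>) (I - {e})) (X e \<omega>)} \<in> events"
    using measurable_sets[OF YZ G] unfolding Y_def by simp
  have section_bound: "emeasure (distr M U Z) (Pair y -` G) \<le> ennreal (\<phi> * L)" for y
  proof -
    define B where "B = (\<lambda>x. \<lambda>i\<in>{e}. x) -` (Pair y -` G)"
    have "(\<lambda>x. \<lambda>i\<in>{e}. x) \<in> measurable borel U" unfolding U_def by measurable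
    from measurable_sets[OF this sets_Pair1[OF G]] have B: "B \<in> sets borel"
      unfolding B_def by simp
    have "Z \<omega> = (\<lambda>i\<in>{e}. X e \<omega>)" for \<omega>
      unfolding Z_def by (auto simp: restrict_def fun_eq_iff)
    then have "Z -` (Pair y -` G) \<inter> space M = X e -` B \<inter> space M"
      unfolding B_def by auto
    then have "emeasure (distr M U Z) (Pair y -` G) = emeasure M (X e -` B \<inter> space M)"
      using rvZ sets_Pair1[OF G] by (simp add: emeasure_distr)
    also have "\<dots> \<le> ennreal (\<phi> * L)"
      using width B unfolding B_def G_def
      by (intro emeasure_distributed_le_width[OF dist]) (auto simp: assms(4-6))
    finally show ?thesis .
  qed
  have "emeasure M {\<omega> \<in> space M. Q (Y \<omega>) (X e \<omega>)} = emeasure (distr M T Y \<Otimes>\<^sub>M distr M U Z) G"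
    using event YZ G prod by (simp add: emeasure_distr)
  also have "\<dots> = (\<integral>\<^sup>+y. emeasure (distr M U Z) (Pair y -` G) \<partial>distr M T Y)"
    using G by (intro PZ.emeasure_pair_measure_alt) simp
  also have "\<dots> \<le> (\<integral>\<^sup>+y. ennreal (\<phi> * L) \<partial>distr M T Y)"
    using section_bound by (intro nn_integral_mono) auto
  also have "\<dots> = ennreal (\<phi> * L)" using PY.emeasure_space_1 by simp
  finally show "emeasure M {\<omega> \<in> space M. Q (restrict (\<lambda>i. X i \<omega>) (I - {e})) (X e \<omega>)} \<le> ennreal (\<phi> * L)"
    unfolding Y_def .
qed

lemma measurable_fun_upd_component[measurable]:
  "(\<lambda>p. ((fst p)(e := snd p)) a)
     \<in> borel_measurable (PiM (I - {e}) (\<lambda>_. borel) \<Otimes>\<^sub>M (borel :: real measure))"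
proof (cases "a = e \<or> a \<in> I")
  case True
  then show ?thesis by (cases "a = e") simp_all
next
  case False
  then have "((fst p)(e := snd p)) a = undefined"
    if "p \<in> space (PiM (I - {e}) (\<lambda>_. borel) \<Otimes>\<^sub>M (borel :: real measure))" for p
    using that by (auto simp: space_pair_measure space_PiM PiE_def extensional_def)
  then show ?thesis
    by (subst measurable_cong[where g = "\<lambda>_. undefined"]) auto
qed

section \<open>Ambiguous edges\<close>

definition ambiguous_edge :: "(nat \<times> nat) set \<Rightarrow> real \<Rightarrow> nat \<times> nat \<Rightarrow> (nat \<times> nat \<Rightarrow> real) \<Rightarrow> bool" where
  "ambiguous_edge E t e r \<longleftrightarrow> (\<exists>C1\<in>dcycles E. e \<in> C1 \<and>
      (\<forall>C\<in>dcycles E. mean_weight r C1 \<le> mean_weight r C) \<and>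
      (\<exists>C2\<in>dcycles E. e \<notin> C2 \<and> mean_weight r C2 \<le> mean_weight r C1 + t))"

lemma ambiguous_edge_cong:
  assumes "\<And>x. x \<in> E \<Longrightarrow> r x = r' x"
  shows "ambiguous_edge E t e r = ambiguous_edge E t e r'"
proof -
  have "mean_weight r C = mean_weight r' C" if "C \<in> dcycles E" for C
    using that assms dcycle_subset unfolding dcycles_def by (intro mean_weight_cong) blast
  then show ?thesis
    unfolding ambiguous_edge_def by (metis (no_types, lifting))
qed

lemma ambiguous_edge_width:
  assumes "E \<subseteq> {0..<n} \<times> {0..<n}" "0 \<le> t"
    and x: "ambiguous_edge E t e (y(e := x))" and x': "ambiguous_edge E t e (y(e := x'))"
  shows "x' - x \<le> t * real n"
proof (cases "x' \<le> x")
  case False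
  obtain C1 C2 where C1: "C1 \<in> dcycles E" "e \<in> C1" and C2: "C2 \<in> dcycles E" "e \<notin> C2"
    and near: "mean_weight (y(e := x)) C2 \<le> mean_weight (y(e := x)) C1 + t"
    and min: "\<forall>C\<in>dcycles E. mean_weight (y(e := x)) C1 \<le> mean_weight (y(e := x)) C"
    using x unfolding ambiguous_edge_def by blast
  obtain D where D: "D \<in> dcycles E" "e \<in> D"
    and min': "\<forall>C\<in>dcycles E. mean_weight (y(e := x')) D \<le> mean_weight (y(e := x')) C"
    using x' unfolding ambiguous_edge_def by blast
  have D_card: "0 < card D" "card D \<le> n"
    using D(1) dcycle_card_pos dcycle_card_le[OF _ assms(1)] unfolding dcycles_def by auto
  have "mean_weight (y(e := x')) D \<le> mean_weight (y(e := x')) C2" using min' C2 by blast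
  also have "\<dots> = mean_weight (y(e := x)) C2" by (rule mean_weight_cong) (use C2(2) in auto)
  also have "\<dots> \<le> mean_weight (y(e := x)) C1 + t" by (rule near)
  also have "\<dots> \<le> mean_weight (y(e := x)) D + t" using min D by simp
  finally have "(x' - x) / real (card D) \<le> t"
    using mean_weight_fun_upd_diff[of D e y x' x] D(2) D_card by (simp add: card_gt_0_iff)
  then have "x' - x \<le> t * real (card D)"
    using D_card by (simp add: divide_le_eq)
  also have "\<dots> \<le> t * real n"
    using D_card \<open>0 \<le> t\<close> by (intro mult_left_mono) auto
  finally show ?thesis .
next
  case True
  moreover have "0 \<le> t * real n" using assms(2) by simp
  ultimately show ?thesis by linarith
qed

lemma not_robust_imp_ambiguous_edge:
  assumes "finite E" "dcycles E \<noteq> {}"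
    and not_robust: "\<not> (\<exists>C. ball_inf E w d \<subseteq> unique_min_region E C)"
  shows "\<exists>e\<in>E. ambiguous_edge E (2 * d) e w"
proof -
  have fin: "finite (mean_weight w ` dcycles E)"
    using finite_dcycles[OF assms(1)] by simp
  have "Min (mean_weight w ` dcycles E) \<in> mean_weight w ` dcycles E"
    using Min_in[OF fin] assms(2) by simp
  then obtain C1 where C1: "C1 \<in> dcycles E" "mean_weight w C1 = Min (mean_weight w ` dcycles E)"
    by (metis imageE)
  then have min: "\<forall>C\<in>dcycles E. mean_weight w C1 \<le> mean_weight w C"
    using fin by simp
  obtain r' where r': "r' \<in> ball_inf E w d" "r' \<notin> unique_min_region E C1"
    using not_robust by blast
  then obtain C2 where C2: "C2 \<in> dcycles E" "C2 \<noteq> C1" "mean_weight r' C2 \<le> mean_weight r' C1"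
    using C1(1) unfolding unique_min_region_def dcycles_def by force
  have "\<bar>mean_weight r' C - mean_weight w C\<bar> \<le> d" if "C \<in> dcycles E" for C
    using that r'(1) dcycle_card_pos dcycle_subset unfolding dcycles_def
    by (intro mean_weight_diff_le_ball_inf) auto
  from this[OF C1(1)] this[OF C2(1)] C2(3)
  have near: "mean_weight w C2 \<le> mean_weight w C1 + 2 * d" by linarith
  have "\<not> C1 \<subseteq> C2"
    using dcycle_subset_imp_eq C1(1) C2 unfolding dcycles_def by blast
  then obtain e where "e \<in> C1" "e \<notin> C2" by blast
  moreover have "e \<in> E" using \<open>e \<in> C1\<close> C1(1) dcycle_subset unfolding dcycles_def by blast
  ultimately show ?thesis
    unfolding ambiguous_edge_def using C1(1) C2(1) min near by blast
qed

lemma (in prob_space) ambiguous_edge_event: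
  fixes X :: "nat \<times> nat \<Rightarrow> 'a \<Rightarrow> real"
  assumes "indep_vars (\<lambda>_. borel) X E" "e \<in> E"
    and "distributed M lborel (X e) g" "\<And>y. g y \<le> ennreal \<phi>" "0 \<le> \<phi>"
    and grid: "E \<subseteq> {0..<n} \<times> {0..<n}" and "0 \<le> t"
  shows "{\<omega> \<in> space M. ambiguous_edge E t e (\<lambda>i. X i \<omega>)} \<in> events"
    and "emeasure M {\<omega> \<in> space M. ambiguous_edge E t e (\<lambda>i. X i \<omega>)} \<le> ennreal (\<phi> * (t * real n))"
proof -
  have "finite E" using grid by (rule finite_subset) auto
  let ?Q = "\<lambda>y x. ambiguous_edge E t e (y(e := x))"
  have Qm: "Measurable.pred (PiM (E - {e}) (\<lambda>_. borel) \<Otimes>\<^sub>M borel) (\<lambda>p. ?Q (fst p) (snd p))"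
    unfolding ambiguous_edge_def mean_weight_def using finite_dcycles[OF \<open>finite E\<close>] by measurable
  have width: "\<And>y x x'. ?Q y x \<Longrightarrow> ?Q y x' \<Longrightarrow> x' - x \<le> t * real n"
    using ambiguous_edge_width[OF grid \<open>0 \<le> t\<close>] by blast
  have "0 \<le> t * real n" using \<open>0 \<le> t\<close> by simp
  note narrow = narrow_section_event[where Q = ?Q, OF assms(1-5) this Qm width]
  have "{\<omega> \<in> space M. ambiguous_edge E t e (\<lambda>i. X i \<omega>)}
      = {\<omega> \<in> space M. ?Q (restrict (\<lambda>i. X i \<omega>) (E - {e})) (X e \<omega>)}"
    using \<open>e \<in> E\<close> by (intro Collect_cong conj_cong refl ambiguous_edge_cong) auto
  with narrow
  show "{\<omega> \<in> space M. ambiguous_edge E t e (\<lambda>i. X i \<omega>)} \<in> events"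
    and "emeasure M {\<omega> \<in> space M. ambiguous_edge E t e (\<lambda>i. X i \<omega>)} \<le> ennreal (\<phi> * (t * real n))"
    by (simp_all only:)
qed

lemma (in prob_space) robust_event_in_events:
  assumes "finite E" "0 \<le> d" "\<And>e. e \<in> E \<Longrightarrow> random_variable borel (X e)"
  shows "{\<omega> \<in> space M. \<exists>C. ball_inf E (\<lambda>e. X e \<omega>) d \<subseteq> unique_min_region E C} \<in> events"
proof -
  have "(\<lambda>\<omega>. \<Sum>e\<in>E. mean_diff_coeff C1 C2 e * X e \<omega>) \<in> borel_measurable M" for C1 C2
    using assms(3) by measurable
  then have "{\<omega> \<in> space M. \<exists>C1\<in>dcycles E. \<forall>C2\<in>dcycles E. C2 \<noteq> C1 \<longrightarrow>
       d * (\<Sum>e\<in>E. \<bar>mean_diff_coeff C1 C2 e\<bar>) < (\<Sum>e\<in>E. mean_diff_coeff C1 C2 e * X e \<omega>)} \<in> events"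
    using finite_dcycles[OF assms(1)] by measurable
  moreover have "{\<omega> \<in> space M. \<exists>C. ball_inf E (\<lambda>e. X e \<omega>) d \<subseteq> unique_min_region E C}
      = {\<omega> \<in> space M. \<exists>C1\<in>dcycles E. \<forall>C2\<in>dcycles E. C2 \<noteq> C1 \<longrightarrow>
       d * (\<Sum>e\<in>E. \<bar>mean_diff_coeff C1 C2 e\<bar>) < (\<Sum>e\<in>E. mean_diff_coeff C1 C2 e * X e \<omega>)}"
    by (auto simp: ball_inf_subset_unique_min_region_iff[OF assms(1,2)] dcycles_def)
  ultimately show ?thesis by simp
qed

theorem mainTheorem6:
  fixes n :: nat and E :: "(nat \<times> nat) set" and M :: "'w measure"
    and X :: "nat \<times> nat \<Rightarrow> 'w \<Rightarrow> real" and f :: "nat \<times> nat \<Rightarrow> real \<Rightarrow> ennreal"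
    and \<phi> :: real
  assumes "n \<ge> 1"
    and "E \<subseteq> {0..<n} \<times> {0..<n}"
    and "\<forall>i\<in>{0..<n}. \<exists>j. (i, j) \<in> E"
    and "\<forall>i\<in>{0..<n}. \<forall>j\<in>{0..<n}. (i, j) \<in> E\<^sup>*"
    and "prob_space M"
    and "prob_space.indep_vars M (\<lambda>_. borel) X E"
    and "\<forall>e\<in>E. distributed M lborel (X e) (f e)"
    and "\<phi> > 0"
    and "\<forall>e\<in>E. \<forall>y. f e y \<le> ennreal \<phi>"
  shows "measure M {\<omega> \<in> space M. \<exists>C. ball_inf E (\<lambda>e. X e \<omega>)
            (1 / (3 * real n ^ 2 * real (card E) * \<phi>)) \<subseteq> unique_min_region E C}
         \<ge> 1 - 1 / real n"
proof -
  interpret prob_space M by fact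
  define d where "d = 1 / (3 * real n ^ 2 * real (card E) * \<phi>)"
  define A where "A e = {\<omega> \<in> space M. ambiguous_edge E (2 * d) e (\<lambda>i. X i \<omega>)}" for e
  define G where "G = {\<omega> \<in> space M. \<exists>C. ball_inf E (\<lambda>e. X e \<omega>) d \<subseteq> unique_min_region E C}"
  have "finite E" using assms(2) by (rule finite_subset) auto
  have "dcycles E \<noteq> {}" using dcycles_nonempty assms(1-3) by blast
  then have "E \<noteq> {}" using dcycle_subset dcycle_card_pos unfolding dcycles_def by fastforce
  then have "0 < d" using \<open>finite E\<close> assms(1,8) by (simp add: d_def card_gt_0_iff)
  have A: "A e \<in> events" "prob (A e) \<le> \<phi> * (2 * d * real n)" if "e \<in> E" for e
    using ambiguous_edge_event[OF assms(6) that _ _ _ assms(2), of "f e" \<phi> "2 * d"] assms(7-9) that \<open>0 < d\<close>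
    by (auto simp: A_def measure_def enn2real_leI)
  have "space M - G \<subseteq> (\<Union>e\<in>E. A e)"
  proof
    fix \<omega> assume \<omega>: "\<omega> \<in> space M - G"
    then have "\<not> (\<exists>C. ball_inf E (\<lambda>e. X e \<omega>) d \<subseteq> unique_min_region E C)"
      unfolding G_def by blast
    from not_robust_imp_ambiguous_edge[OF \<open>finite E\<close> \<open>dcycles E \<noteq> {}\<close> this]
    show "\<omega> \<in> (\<Union>e\<in>E. A e)" using \<omega> unfolding A_def by blast
  qed
  then have "prob (space M - G) \<le> prob (\<Union>e\<in>E. A e)"
    using A \<open>finite E\<close> by (intro finite_measure_mono) auto
  also have "\<dots> \<le> (\<Sum>e\<in>E. prob (A e))"
    using A by (intro finite_measure_subadditive_finite[OF \<open>finite E\<close>]) auto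
  also have "\<dots> \<le> real (card E) * (\<phi> * (2 * d * real n))"
    using A(2) by (rule sum_bounded_above)
  also have "\<dots> \<le> 1 / real n"
    using assms(1,8) \<open>E \<noteq> {}\<close> \<open>finite E\<close> by (simp add: d_def field_simps power2_eq_square card_gt_0_iff)
  finally have "prob (space M - G) \<le> 1 / real n" .
  moreover have "G \<in> events"
    unfolding G_def using robust_event_in_events \<open>finite E\<close> \<open>0 < d\<close> assms(7)
    by (auto simp: distributed_def)
  ultimately show ?thesis
    using prob_compl[of G] unfolding G_def d_def by simp
qed

end
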